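(* Let $G$ be a free group on $k\ge 2$ generators and let $m\ge 1$. Let $\Phi$ be a linear action of $G$ on $\mathbb R^m$ (i.e. each $f_g=\Phi(g,\cdot)$ is an invertible linear map of $\mathbb R^m$), where $\mathbb R^m$ carries the Euclidean metric. Then $\Phi$ does not have the shadowing property.
   Context: An action of a group $G$ on a metric space $(\Omega,\mathrm{dist})$ is a map $\Phi:G\times\Omega\to\Omega$ such that each $f_g=\Phi(g,\cdot)$ is a homeomorphism, $\Phi(e,x)=x$, and $\Phi(g_1g_2,x)=\Phi(g_1,\Phi(g_2,x))$. Fix a finite symmetric generating set $S$ of $G$ (e.g. the free generators and their inverses; the property below does not depend on this choice). For $d>0$, a family $\{y_g\}_{g\in G}\subset\Omega$ is a $d$-pseudotrajectory if $\mathrm{dist}(y_{sg},f_s(y_g))<d$ for all $s\in S$, $g\in G$. The action has the shadowing property if for every $\varepsilon>0$ there is $d>0$ such that for every $d$-pseudotrajectory $\{y_g\}_{g\in G}$ there is $x_e\in\Omega$ with $\mathrm{dist}(y_g,f_g(x_e))<\varepsilon$ for all $g\in G$. *)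

theory Defs
  imports "HOL-Analysis.Analysis"
begin

text \<open>A letter (i, True) is the generator a_i, (i, False) is its inverse a_i^-1.
  Elements of the free group F_k on generators a_0, ..., a_(k-1) are reduced words
  over these letters; the empty word is the identity.\<close>

type_synonym fletter = "nat \<times> bool"
type_synonym fword = "fletter list"

fun reduced :: "fword \<Rightarrow> bool" where
  "reduced [] = True"
| "reduced [a] = True"
| "reduced (a # b # w) = (\<not> (fst a = fst b \<and> snd a \<noteq> snd b) \<and> reduced (b # w))"

definition free_carrier :: "nat \<Rightarrow> fword set" where
  "free_carrier k = {w. (\<forall>a\<in>set w. fst a < k) \<and> reduced w}"

fun red_cons :: "fletter \<Rightarrow> fword \<Rightarrow> fword" where
  "red_cons a [] = [a]"
| "red_cons a (b # w) = (if fst a = fst b \<and> snd a \<noteq> snd b then w else a # b # w)"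

definition free_mult :: "fword \<Rightarrow> fword \<Rightarrow> fword" where
  "free_mult w v = foldr red_cons w v"

definition free_one :: fword where
  "free_one = []"

definition free_gens :: "nat \<Rightarrow> fword set" where
  "free_gens k = {[(i, b)] | i b. i < k}"

definition free_action :: "nat \<Rightarrow> (fword \<Rightarrow> 'a::metric_space \<Rightarrow> 'a) \<Rightarrow> bool" where
  "free_action k \<Phi> \<longleftrightarrow>
     (\<forall>g\<in>free_carrier k. \<exists>h. homeomorphism UNIV UNIV (\<Phi> g) h) \<and>
     (\<forall>x. \<Phi> free_one x = x) \<and>
     (\<forall>g1\<in>free_carrier k. \<forall>g2\<in>free_carrier k. \<forall>x.
        \<Phi> (free_mult g1 g2) x = \<Phi> g1 (\<Phi> g2 x))"

definition pseudotrajectory ::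
  "nat \<Rightarrow> (fword \<Rightarrow> 'a::metric_space \<Rightarrow> 'a) \<Rightarrow> real \<Rightarrow> (fword \<Rightarrow> 'a) \<Rightarrow> bool" where
  "pseudotrajectory k \<Phi> d y \<longleftrightarrow>
     (\<forall>s\<in>free_gens k. \<forall>g\<in>free_carrier k. dist (y (free_mult s g)) (\<Phi> s (y g)) < d)"

definition has_shadowing :: "nat \<Rightarrow> (fword \<Rightarrow> 'a::metric_space \<Rightarrow> 'a) \<Rightarrow> bool" where
  "has_shadowing k \<Phi> \<longleftrightarrow>
     (\<forall>\<epsilon>>0. \<exists>d>0. \<forall>y. pseudotrajectory k \<Phi> d y \<longrightarrow>
        (\<exists>x. \<forall>g\<in>free_carrier k. dist (y g) (\<Phi> g x) < \<epsilon>))"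

lemma "free_mult [(0, True)] [(0, False), (1, True)] = [(1, True)]"
  by (simp add: free_mult_def)
lemma "free_mult [(0, True), (1, False)] [(1, True), (0, True)] = [(0, True), (0, True)]"
  by (simp add: free_mult_def)

end

theory Submission
  imports Defs "HOL-Library.Sublist"
begin

text \<open>For a linear action, shadowing is invariant under scaling, so it would force every
  pseudotrajectory with merely bounded error to stay within bounded distance of a true orbit.
  Writing a = a_0 and b = a_1, the sets of words ending in b a^j are pairwise disjoint for
  different j. On the j-th of these regions we build a pseudotrajectory y_j with bounded error that
  vanishes outside the region and is unbounded inside it. A linear relation among m + 1 of the
  shadowing orbits then bounds the corresponding combination of the y_j, a contradiction.
  The y_j are true orbits cut off outside the region if some orbit \<Phi> h z is unbounded for h
  ranging over the words that can precede b; otherwise these maps \<Phi> h are uniformly bounded,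
  and the true orbit weighted by word length has bounded error yet grows linearly along a^n.\<close>

lemma reduced_appendD1: "reduced (xs @ ys) \<Longrightarrow> reduced xs"
  by (induction xs rule: reduced.induct) auto

lemma reduced_ConsD: "reduced (x # xs) \<Longrightarrow> reduced xs"
  by (cases xs) auto

lemma reduced_append_Cons:
  "reduced (xs @ [y]) \<Longrightarrow> reduced (y # ys) \<Longrightarrow> reduced (xs @ y # ys)"
  by (induction xs rule: reduced.induct) auto

lemma reduced_replicate: "reduced (replicate n x)"
proof (induction n)
  case (Suc n)
  then show ?case by (cases n) auto
qed simp

lemma free_mult_reduced: "reduced (xs @ ys) \<Longrightarrow> free_mult xs ys = xs @ ys"
proof (induction xs)
  case (Cons x xs)
  then have "free_mult xs ys = xs @ ys"
    using reduced_ConsD by auto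
  then show ?case
    using Cons.prems by (cases "xs @ ys") (auto simp: free_mult_def)
qed (simp add: free_mult_def)

lemma free_mult_replicate_cancel:
  "free_mult (replicate n (i, False)) (replicate (n + p) (i, True)) = replicate p (i, True)"
proof (induction n arbitrary: p)
  case (Suc n)
  then show ?case
    using Suc.IH[of "Suc p"] by (simp add: free_mult_def)
qed (simp add: free_mult_def)

lemma free_gens_carrier: "s \<in> free_gens k \<Longrightarrow> s \<in> free_carrier k"
  by (auto simp: free_gens_def free_carrier_def)

lemma red_cons_carrier: "g \<in> free_carrier k \<Longrightarrow> fst s < k \<Longrightarrow> red_cons s g \<in> free_carrier k"
  by (cases g) (auto simp: free_carrier_def dest: reduced_ConsD)

lemma length_red_cons: "\<bar>real (length (red_cons s g)) - real (length g)\<bar> = 1"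
  by (cases g) auto

lemma suffix_red_cons_leave:
  assumes "suffix v g" and "\<not> suffix v (red_cons s g)" and "v \<noteq> []"
  shows "g = v \<and> s = (fst (hd v), \<not> snd (hd v))"
proof -
  obtain h where h: "g = h @ v"
    using assms(1) by (auto simp: suffix_def)
  show ?thesis
  proof (cases h)
    case Nil
    then show ?thesis
      using assms h by (cases v) (auto simp: suffix_def prod_eq_iff split: if_splits)
  next
    case (Cons x h')
    then show ?thesis
      using assms h by (auto simp: suffix_def split: if_splits)
  qed
qed

lemma suffix_red_cons_enter:
  assumes "\<not> suffix v g" and "suffix v (red_cons s g)"
  shows "red_cons s g = v"
proof (cases g)
  case Nil
  then show ?thesis
    using assms by (cases v) (auto simp: suffix_def Cons_eq_append_conv)
next
  case (Cons x g')
  show ?thesis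
  proof (cases "fst s = fst x \<and> snd s \<noteq> snd x")
    case True
    then show ?thesis
      using assms Cons by (auto intro: suffix_ConsI)
  next
    case False
    then obtain h where "s # g = h @ v"
      using assms Cons by (auto simp: suffix_def)
    then show ?thesis
      using assms Cons False by (cases h) (auto simp: suffix_def)
  qed
qed

definition ba_word :: "nat \<Rightarrow> fword" where
  "ba_word j = (1, True) # replicate j (0, True)"

definition before_b :: "nat \<Rightarrow> fword set" where
  "before_b k = {h. h @ [(1, True)] \<in> free_carrier k}"

lemma before_b_carrier: "h \<in> before_b k \<Longrightarrow> h \<in> free_carrier k"
  by (auto simp: before_b_def free_carrier_def dest: reduced_appendD1)

lemma replicate_before_b: "k \<ge> 2 \<Longrightarrow> replicate n (0, e) \<in> before_b k"
proof (induction n)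
  case (Suc n)
  then show ?case by (cases n) (auto simp: before_b_def free_carrier_def)
qed (simp add: before_b_def free_carrier_def)

lemma reduced_ba_word: "reduced (ba_word j)"
  using reduced_replicate[of "Suc j" "(0, True)"] by (cases j) (auto simp: ba_word_def)

lemma ba_word_carrier: "k \<ge> 2 \<Longrightarrow> ba_word j \<in> free_carrier k"
  using reduced_ba_word by (auto simp: ba_word_def free_carrier_def)

lemma append_ba_word_reduced: "h \<in> before_b k \<Longrightarrow> reduced (h @ ba_word j)"
  using reduced_append_Cons[of h "(1, True)"] reduced_ba_word[of j]
  by (auto simp: before_b_def free_carrier_def ba_word_def)

lemma append_ba_word_carrier: "k \<ge> 2 \<Longrightarrow> h \<in> before_b k \<Longrightarrow> h @ ba_word j \<in> free_carrier k"
  using append_ba_word_reduced[of h k j] before_b_carrier[of h k]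
  by (auto simp: free_carrier_def ba_word_def)

lemma suffix_ba_word_before_b:
  assumes "g \<in> free_carrier k" and "suffix (ba_word j) g"
  obtains h where "h \<in> before_b k" and "g = h @ ba_word j"
proof -
  obtain h where h: "g = h @ ba_word j"
    using assms(2) by (auto simp: suffix_def)
  then have "reduced ((h @ [(1, True)]) @ replicate j (0, True))"
    using assms(1) by (simp add: free_carrier_def ba_word_def)
  then have "reduced (h @ [(1, True)])"
    by (rule reduced_appendD1)
  then have "h \<in> before_b k"
    using assms(1) h by (auto simp: before_b_def free_carrier_def ba_word_def)
  then show thesis
    using h by (rule that)
qed

lemma suffix_ba_word_ba_word:
  assumes "suffix (ba_word i) (ba_word j)"
  shows "i = j"
proof -
  obtain zs where eq: "ba_word j = zs @ ba_word i"
    using assms by (auto simp: suffix_def)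
  show ?thesis
  proof (cases zs)
    case Nil
    then show ?thesis
      using eq by (simp add: ba_word_def)
  next
    case (Cons z zs')
    then have "replicate j (0::nat, True) = zs' @ (1, True) # replicate i (0, True)"
      using eq by (simp add: ba_word_def)
    then have "(1, True) \<in> set (replicate j (0::nat, True))"
      by (metis in_set_conv_decomp)
    then show ?thesis
      by simp
  qed
qed

lemma suffix_ba_word_unique: "suffix (ba_word i) g \<Longrightarrow> suffix (ba_word j) g \<Longrightarrow> i = j"
  using suffix_same_cases suffix_ba_word_ba_word by blast

lemma exists_nontrivial_linear_relation:
  fixes x :: "nat \<Rightarrow> 'a::euclidean_space"
  obtains \<beta> i where "i \<le> DIM('a)" and "\<beta> i \<noteq> 0" and "(\<Sum>j\<le>DIM('a). \<beta> j *\<^sub>R x j) = 0"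
proof (cases "inj_on x {..DIM('a)}")
  case True
  let ?S = "x ` {..DIM('a)}"
  have "dependent ?S"
    using True by (intro dependent_biggerset) (simp add: card_image)
  then obtain u v where "v \<in> ?S" "u v \<noteq> 0" and u: "(\<Sum>v\<in>?S. u v *\<^sub>R v) = 0"
    using dependent_finite[of ?S] by auto
  moreover have "(\<Sum>v\<in>?S. u v *\<^sub>R v) = (\<Sum>j\<le>DIM('a). u (x j) *\<^sub>R x j)"
    using sum.reindex[OF True, of "\<lambda>v. u v *\<^sub>R v"] by simp
  ultimately show thesis
    using that[of _ "\<lambda>j. u (x j)"] by auto
next
  case False
  then obtain i j where ij: "i \<le> DIM('a)" "j \<le> DIM('a)" "i \<noteq> j" "x i = x j"
    unfolding inj_on_def by auto
  define \<beta> where "\<beta> l = (if l = i then 1 else if l = j then -1 else 0::real)" for l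
  have "(\<Sum>l\<le>DIM('a). \<beta> l *\<^sub>R x l) = (\<Sum>l\<in>{i, j}. \<beta> l *\<^sub>R x l)"
    using ij by (intro sum.mono_neutral_right) (auto simp: \<beta>_def)
  also have "\<dots> = 0"
    using ij by (simp add: \<beta>_def)
  finally show thesis
    using that[of i \<beta>] ij by (simp add: \<beta>_def)
qed

lemma uniformly_bounded_linear_family:
  fixes F :: "'i \<Rightarrow> 'a::euclidean_space \<Rightarrow> 'b::real_normed_vector"
  assumes lin: "\<And>h. h \<in> H \<Longrightarrow> linear (F h)"
    and bnd: "\<And>z. bounded ((\<lambda>h. F h z) ` H)"
  obtains M where "M > 0" and "\<And>h x. h \<in> H \<Longrightarrow> norm (F h x) \<le> M * norm x"
proof -
  have "\<forall>z. \<exists>c. \<forall>h\<in>H. norm (F h z) \<le> c"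
    using bnd by (simp add: bounded_iff)
  from choice[OF this] obtain C where C: "\<forall>z. \<forall>h\<in>H. norm (F h z) \<le> C z"
    by blast
  define M where "M = 1 + (\<Sum>i\<in>Basis. \<bar>C i\<bar>)"
  have "norm (F h x) \<le> M * norm x" if h: "h \<in> H" for h x
  proof -
    have "F h x = F h (\<Sum>i\<in>Basis. (x \<bullet> i) *\<^sub>R i)"
      by (simp add: euclidean_representation)
    also have "\<dots> = (\<Sum>i\<in>Basis. (x \<bullet> i) *\<^sub>R F h i)"
      using lin[OF h] by (simp add: linear_sum linear_scale)
    finally have expansion: "F h x = (\<Sum>i\<in>Basis. (x \<bullet> i) *\<^sub>R F h i)" .
    have "norm (F h x) \<le> (\<Sum>i\<in>Basis. norm ((x \<bullet> i) *\<^sub>R F h i))"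
      unfolding expansion by (rule norm_sum)
    also have "\<dots> = (\<Sum>i\<in>Basis. \<bar>x \<bullet> i\<bar> * norm (F h i))"
      by simp
    also have "\<dots> \<le> (\<Sum>i\<in>Basis. norm x * \<bar>C i\<bar>)"
    proof (intro sum_mono mult_mono)
      show "norm (F h i) \<le> \<bar>C i\<bar>" for i
        using C h abs_ge_self order_trans by blast
    qed (simp_all add: Basis_le_norm)
    also have "\<dots> \<le> M * norm x"
      by (simp add: M_def sum_distrib_left[symmetric] algebra_simps)
    finally show ?thesis .
  qed
  moreover have "M > 0"
    by (simp add: M_def add_pos_nonneg sum_nonneg)
  ultimately show thesis
    using that by blast
qed

definition bounded_pseudotrajectory ::
  "nat \<Rightarrow> (fword \<Rightarrow> 'a::real_normed_vector \<Rightarrow> 'a) \<Rightarrow> (fword \<Rightarrow> 'a) \<Rightarrow> bool" where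
  "bounded_pseudotrajectory k \<Phi> y \<longleftrightarrow>
     (\<exists>G. \<forall>s\<in>free_gens k. \<forall>g\<in>free_carrier k. norm (y (free_mult s g) - \<Phi> s (y g)) \<le> G)"

text \<open>Shrink the pseudotrajectory until its error is below d, shadow it, and scale back.\<close>

lemma bounded_pseudotrajectory_shadowed:
  fixes \<Phi> :: "fword \<Rightarrow> 'a::real_normed_vector \<Rightarrow> 'a"
  assumes "has_shadowing k \<Phi>" and lin: "\<And>g. g \<in> free_carrier k \<Longrightarrow> linear (\<Phi> g)"
    and "bounded_pseudotrajectory k \<Phi> y"
  shows "\<exists>x K. \<forall>g\<in>free_carrier k. norm (y g - \<Phi> g x) \<le> K"
proof -
  obtain G where G: "\<And>s g. s \<in> free_gens k \<Longrightarrow> g \<in> free_carrier k \<Longrightarrow>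
      norm (y (free_mult s g) - \<Phi> s (y g)) \<le> G"
    using assms(3) unfolding bounded_pseudotrajectory_def by blast
  obtain d where "d > 0"
    and d: "\<And>y. pseudotrajectory k \<Phi> d y \<Longrightarrow> \<exists>x. \<forall>g\<in>free_carrier k. dist (y g) (\<Phi> g x) < 1"
    using assms(1) unfolding has_shadowing_def by (meson zero_less_one)
  define l where "l = d / (\<bar>G\<bar> + 1)"
  have "l > 0"
    using \<open>d > 0\<close> by (simp add: l_def add_pos_nonneg)
  have "l * \<bar>G\<bar> < l * (\<bar>G\<bar> + 1)"
    using \<open>l > 0\<close> by simp
  also have "\<dots> = d"
    by (simp add: l_def add_pos_nonneg)
  finally have "l * \<bar>G\<bar> < d" .
  have scaled: "dist (l *\<^sub>R u) (\<Phi> g (l *\<^sub>R v)) = l * norm (u - \<Phi> g v)" if "g \<in> free_carrier k" for g u v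
    using lin[OF that] \<open>l > 0\<close> by (simp add: dist_norm linear_scale scaleR_diff_right[symmetric])
  have "pseudotrajectory k \<Phi> d (\<lambda>g. l *\<^sub>R y g)"
    unfolding pseudotrajectory_def
  proof (intro ballI)
    fix s g
    assume s: "s \<in> free_gens k" and g: "g \<in> free_carrier k"
    have "dist (l *\<^sub>R y (free_mult s g)) (\<Phi> s (l *\<^sub>R y g)) \<le> l * \<bar>G\<bar>"
      using scaled[OF free_gens_carrier[OF s]] G[OF s g] \<open>l > 0\<close> by (simp add: mult_left_mono)
    then show "dist (l *\<^sub>R y (free_mult s g)) (\<Phi> s (l *\<^sub>R y g)) < d"
      using \<open>l * \<bar>G\<bar> < d\<close> by simp
  qed
  then obtain x where x: "\<And>g. g \<in> free_carrier k \<Longrightarrow> dist (l *\<^sub>R y g) (\<Phi> g x) < 1"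
    using d by blast
  have "norm (y g - \<Phi> g (x /\<^sub>R l)) \<le> 1 / l" if g: "g \<in> free_carrier k" for g
  proof -
    have "l * norm (y g - \<Phi> g (x /\<^sub>R l)) < 1"
      using scaled[OF g, of "y g" "x /\<^sub>R l"] x[OF g] \<open>l > 0\<close> by simp
    then show ?thesis
      using \<open>l > 0\<close> by (simp add: field_simps)
  qed
  then show ?thesis by blast
qed

lemma bounded_pseudotrajectory_restrict_suffix:
  fixes Y :: "fword \<Rightarrow> 'a::real_normed_vector"
  assumes "v \<noteq> []" and zero: "\<And>s. s \<in> free_gens k \<Longrightarrow> \<Phi> s 0 = 0"
    and inside: "\<exists>G. \<forall>s\<in>free_gens k. \<forall>g\<in>free_carrier k. suffix v g \<longrightarrow> suffix v (free_mult s g) \<longrightarrow>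
      norm (Y (free_mult s g) - \<Phi> s (Y g)) \<le> G"
  shows "bounded_pseudotrajectory k \<Phi> (\<lambda>g. if suffix v g then Y g else 0)"
proof -
  obtain G where G: "\<And>s g. s \<in> free_gens k \<Longrightarrow> g \<in> free_carrier k \<Longrightarrow> suffix v g \<Longrightarrow>
      suffix v (free_mult s g) \<Longrightarrow> norm (Y (free_mult s g) - \<Phi> s (Y g)) \<le> G"
    using inside by blast
  define G' where "G' = max G (max (norm (Y v)) (norm (\<Phi> [(fst (hd v), \<not> snd (hd v))] (Y v))))"
  have "norm ((if suffix v (free_mult s g) then Y (free_mult s g) else 0)
      - \<Phi> s (if suffix v g then Y g else 0)) \<le> G'"
    if s: "s \<in> free_gens k" and g: "g \<in> free_carrier k" for s g
  proof -
    obtain s0 where s0: "s = [s0]"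
      using s unfolding free_gens_def by auto
    then have sg: "free_mult s g = red_cons s0 g"
      by (simp add: free_mult_def)
    consider (stay) "suffix v g" "suffix v (free_mult s g)"
      | (leave) "suffix v g" "\<not> suffix v (free_mult s g)"
      | (enter) "\<not> suffix v g" "suffix v (free_mult s g)"
      | (away) "\<not> suffix v g" "\<not> suffix v (free_mult s g)"
      by blast
    then show ?thesis
    proof cases
      case stay
      then show ?thesis
        using G[OF s g] by (simp add: G'_def)
    next
      case leave
      then have "g = v" and "s = [(fst (hd v), \<not> snd (hd v))]"
        using suffix_red_cons_leave[of v g s0] sg s0 \<open>v \<noteq> []\<close> by auto
      then show ?thesis
        using leave by (simp add: G'_def)
    next
      case enter
      then have "free_mult s g = v"
        using suffix_red_cons_enter[of v g s0] sg by simp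
      then show ?thesis
        using enter zero[OF s] by (simp add: G'_def)
    next
      case away
      then show ?thesis
        using zero[OF s] by (simp add: G'_def le_max_iff_disj)
    qed
  qed
  then show ?thesis
    unfolding bounded_pseudotrajectory_def by blast
qed

text \<open>If the shadowing points x_j of the pseudotrajectories y_j exist, a linear relation
  \<Sum> \<beta>_j x_j = 0 among DIM + 1 of them makes \<Sum> \<beta>_j y_j bounded; but at a point where only
  y_i is nonzero this sum is \<beta>_i y_i, which is unbounded.\<close>

lemma not_has_shadowing_separated_family:
  fixes \<Phi> :: "fword \<Rightarrow> 'a::euclidean_space \<Rightarrow> 'a" and y :: "nat \<Rightarrow> fword \<Rightarrow> 'a"
  assumes lin: "\<And>g. g \<in> free_carrier k \<Longrightarrow> linear (\<Phi> g)"
    and pt: "\<And>j. bounded_pseudotrajectory k \<Phi> (y j)"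
    and separated: "\<And>i K. \<exists>g\<in>free_carrier k. K < norm (y i g) \<and> (\<forall>j. j \<noteq> i \<longrightarrow> y j g = 0)"
  shows "\<not> has_shadowing k \<Phi>"
proof
  assume "has_shadowing k \<Phi>"
  then have "\<forall>j. \<exists>x K. \<forall>g\<in>free_carrier k. norm (y j g - \<Phi> g x) \<le> K"
    using bounded_pseudotrajectory_shadowed[OF _ lin pt] by blast
  from choice[OF this] obtain x where "\<forall>j. \<exists>K. \<forall>g\<in>free_carrier k. norm (y j g - \<Phi> g (x j)) \<le> K"
    by blast
  from choice[OF this] obtain K where xK: "\<forall>j. \<forall>g\<in>free_carrier k. norm (y j g - \<Phi> g (x j)) \<le> K j"
    by blast
  obtain \<beta> i where i: "i \<le> DIM('a)" "\<beta> i \<noteq> 0" and rel: "(\<Sum>j\<le>DIM('a). \<beta> j *\<^sub>R x j) = 0"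
    using exists_nontrivial_linear_relation[of x] by blast
  define S where "S = (\<Sum>j\<le>DIM('a). \<bar>\<beta> j\<bar> * K j)"
  obtain g where g: "g \<in> free_carrier k" and big: "S / \<bar>\<beta> i\<bar> < norm (y i g)"
    and zero: "\<And>j. j \<noteq> i \<Longrightarrow> y j g = 0"
    using separated by blast
  have "(\<Sum>j\<le>DIM('a). \<beta> j *\<^sub>R y j g) = (\<Sum>j\<le>DIM('a). if j = i then \<beta> i *\<^sub>R y i g else 0)"
    using zero by (intro sum.cong) auto
  then have "\<beta> i *\<^sub>R y i g = (\<Sum>j\<le>DIM('a). \<beta> j *\<^sub>R y j g)"
    using i(1) by simp
  also have "\<dots> = (\<Sum>j\<le>DIM('a). \<beta> j *\<^sub>R (y j g - \<Phi> g (x j)))"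
  proof -
    have "(\<Sum>j\<le>DIM('a). \<beta> j *\<^sub>R \<Phi> g (x j)) = \<Phi> g (\<Sum>j\<le>DIM('a). \<beta> j *\<^sub>R x j)"
      using lin[OF g] by (simp add: linear_sum linear_scale)
    then show ?thesis
      using rel lin[OF g] by (simp add: linear_0 scaleR_diff_right sum_subtractf)
  qed
  finally have "\<bar>\<beta> i\<bar> * norm (y i g) = norm (\<Sum>j\<le>DIM('a). \<beta> j *\<^sub>R (y j g - \<Phi> g (x j)))"
    by (metis norm_scaleR)
  also have "\<dots> \<le> (\<Sum>j\<le>DIM('a). norm (\<beta> j *\<^sub>R (y j g - \<Phi> g (x j))))"
    by (rule norm_sum)
  also have "\<dots> \<le> S"
    unfolding S_def using xK g by (intro sum_mono) (simp add: mult_left_mono)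
  finally show False
    using big i(2) by (simp add: pos_divide_less_eq mult.commute)
qed

locale linear_free_action =
  fixes k :: nat and \<Phi> :: "fword \<Rightarrow> 'a::euclidean_space \<Rightarrow> 'a"
  assumes two_generators: "k \<ge> 2"
    and action: "free_action k \<Phi>"
    and linear_bij: "\<forall>g\<in>free_carrier k. linear (\<Phi> g) \<and> bij (\<Phi> g)"
begin

lemma linear_action: "g \<in> free_carrier k \<Longrightarrow> linear (\<Phi> g)"
  using linear_bij by blast

lemma action_mult:
  "g1 \<in> free_carrier k \<Longrightarrow> g2 \<in> free_carrier k \<Longrightarrow> \<Phi> (free_mult g1 g2) x = \<Phi> g1 (\<Phi> g2 x)"
  using action unfolding free_action_def by blast

lemma action_one: "\<Phi> [] x = x"
  using action unfolding free_action_def free_one_def by blast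

lemma action_append_ba_word:
  assumes "h \<in> before_b k"
  shows "\<Phi> (h @ ba_word j) x = \<Phi> h (\<Phi> (ba_word j) x)"
  using action_mult[OF before_b_carrier[OF assms] ba_word_carrier[OF two_generators]]
    free_mult_reduced[OF append_ba_word_reduced[OF assms]] by simp

lemma orbit_through_ba_word:
  "h \<in> before_b k \<Longrightarrow> \<Phi> (h @ ba_word j) (inv (\<Phi> (ba_word j)) z) = \<Phi> h z"
  using linear_bij ba_word_carrier[OF two_generators]
  by (simp add: action_append_ba_word bij_is_surj surj_f_inv_f)

lemma not_has_shadowing_suffix_family:
  fixes Y :: "nat \<Rightarrow> fword \<Rightarrow> 'a"
  assumes inside: "\<And>j. \<exists>G. \<forall>s\<in>free_gens k. \<forall>g\<in>free_carrier k.
      suffix (ba_word j) g \<longrightarrow> suffix (ba_word j) (free_mult s g) \<longrightarrow>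
      norm (Y j (free_mult s g) - \<Phi> s (Y j g)) \<le> G"
    and unbounded: "\<And>j K. \<exists>g\<in>free_carrier k. suffix (ba_word j) g \<and> K < norm (Y j g)"
  shows "\<not> has_shadowing k \<Phi>"
proof (rule not_has_shadowing_separated_family)
  show "linear (\<Phi> g)" if "g \<in> free_carrier k" for g
    using that by (rule linear_action)
  show "bounded_pseudotrajectory k \<Phi> (\<lambda>g. if suffix (ba_word j) g then Y j g else 0)" for j
    using inside[of j] linear_0[OF linear_action[OF free_gens_carrier]]
    by (intro bounded_pseudotrajectory_restrict_suffix) (simp_all add: ba_word_def)
  show "\<exists>g\<in>free_carrier k. K < norm (if suffix (ba_word i) g then Y i g else 0) \<and>
      (\<forall>j. j \<noteq> i \<longrightarrow> (if suffix (ba_word j) g then Y j g else 0) = 0)" for i K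
  proof -
    obtain g where "g \<in> free_carrier k" "suffix (ba_word i) g" "K < norm (Y i g)"
      using unbounded by blast
    moreover have "\<not> suffix (ba_word j) g" if "j \<noteq> i" for j
      using suffix_ba_word_unique \<open>suffix (ba_word i) g\<close> that by blast
    ultimately show ?thesis
      by auto
  qed
qed

text \<open>Witnesses: the true orbits through inv (\<Phi> (ba_word j)) z, cut off outside the words
  ending in ba_word j.\<close>

lemma has_shadowing_imp_bounded_orbits:
  assumes "has_shadowing k \<Phi>"
  shows "bounded ((\<lambda>h. \<Phi> h z) ` before_b k)"
proof (rule ccontr)
  assume unbounded: "\<not> bounded ((\<lambda>h. \<Phi> h z) ` before_b k)"
  have "\<not> has_shadowing k \<Phi>"
  proof (rule not_has_shadowing_suffix_family[where Y = "\<lambda>j g. \<Phi> g (inv (\<Phi> (ba_word j)) z)"])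
    show "\<exists>G. \<forall>s\<in>free_gens k. \<forall>g\<in>free_carrier k. suffix (ba_word j) g \<longrightarrow>
        suffix (ba_word j) (free_mult s g) \<longrightarrow>
        norm (\<Phi> (free_mult s g) (inv (\<Phi> (ba_word j)) z) - \<Phi> s (\<Phi> g (inv (\<Phi> (ba_word j)) z))) \<le> G"
      for j
      by (intro exI[of _ 0]) (simp add: action_mult free_gens_carrier)
    show "\<exists>g\<in>free_carrier k. suffix (ba_word j) g \<and> K < norm (\<Phi> g (inv (\<Phi> (ba_word j)) z))"
      for j K
    proof -
      have "\<not> (\<forall>h\<in>before_b k. norm (\<Phi> h z) \<le> K)"
        using unbounded by (auto simp: bounded_iff)
      then obtain h where "h \<in> before_b k" and "K < norm (\<Phi> h z)"
        by (auto simp: not_le)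
      then show ?thesis
        using orbit_through_ba_word append_ba_word_carrier[OF two_generators]
        by (intro bexI[of _ "h @ ba_word j"]) (auto simp: suffix_def)
    qed
  qed
  then show False
    using assms by contradiction
qed

lemma length_weighted_orbit_error:
  assumes C: "\<And>h. h \<in> before_b k \<Longrightarrow> norm (\<Phi> h z) \<le> C"
    and s: "s \<in> free_gens k" and g: "g \<in> free_carrier k"
    and suffix: "suffix (ba_word j) (free_mult s g)"
  defines "w \<equiv> inv (\<Phi> (ba_word j)) z"
  shows "norm (real (length (free_mult s g)) *\<^sub>R \<Phi> (free_mult s g) w
    - \<Phi> s (real (length g) *\<^sub>R \<Phi> g w)) \<le> C"
proof -
  obtain s0 where s0: "s = [s0]" "fst s0 < k"
    using s unfolding free_gens_def by auto
  then have sg: "free_mult s g = red_cons s0 g"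
    by (simp add: free_mult_def)
  have "free_mult s g \<in> free_carrier k"
    using red_cons_carrier[OF g s0(2)] sg by simp
  then obtain h where h: "h \<in> before_b k" "free_mult s g = h @ ba_word j"
    using suffix by (rule suffix_ba_word_before_b)
  have "\<Phi> s (real (length g) *\<^sub>R \<Phi> g w) = real (length g) *\<^sub>R \<Phi> (free_mult s g) w"
    using linear_action[OF free_gens_carrier[OF s]] action_mult[OF free_gens_carrier[OF s] g]
    by (simp add: linear_scale)
  then have "real (length (free_mult s g)) *\<^sub>R \<Phi> (free_mult s g) w - \<Phi> s (real (length g) *\<^sub>R \<Phi> g w)
      = (real (length (free_mult s g)) - real (length g)) *\<^sub>R \<Phi> h z"
    using orbit_through_ba_word[OF h(1)] h(2) by (simp add: scaleR_diff_left w_def)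
  then show ?thesis
    using C[OF h(1)] length_red_cons[of s0 g] sg by simp
qed

lemma norm_le_power_a:
  assumes "\<And>h x. h \<in> before_b k \<Longrightarrow> norm (\<Phi> h x) \<le> M * norm x"
  shows "norm x \<le> M * norm (\<Phi> (replicate n (0, True)) x)"
proof -
  have a: "replicate n (0, True) \<in> before_b k" and a_inv: "replicate n (0, False) \<in> before_b k"
    using replicate_before_b[OF two_generators] by auto
  have "\<Phi> (replicate n (0, False)) (\<Phi> (replicate n (0, True)) x) = x"
    using action_mult[OF before_b_carrier[OF a_inv] before_b_carrier[OF a]]
      free_mult_replicate_cancel[of n 0 0] action_one by simp
  then show ?thesis
    using assms[OF a_inv, of "\<Phi> (replicate n (0, True)) x"] by simp
qed

text \<open>The length weight changes by 1 per generator step, so the error stays bounded by the orbit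
  bound, while along h = a^n the weighted orbit grows linearly because \<Phi> (a^-n) is uniformly
  bounded.\<close>

lemma not_has_shadowing_if_bounded_orbits:
  assumes bounded_orbits: "\<And>z. bounded ((\<lambda>h. \<Phi> h z) ` before_b k)"
  shows "\<not> has_shadowing k \<Phi>"
proof -
  obtain M where "M > 0" and M: "\<And>h x. h \<in> before_b k \<Longrightarrow> norm (\<Phi> h x) \<le> M * norm x"
    using uniformly_bounded_linear_family[of "before_b k" \<Phi>] bounded_orbits
      linear_action[OF before_b_carrier] by blast
  define z :: 'a where "z = One"
  have "norm z > 0"
    using One_non_0 by (auto simp: z_def)
  obtain C where C: "\<And>h. h \<in> before_b k \<Longrightarrow> norm (\<Phi> h z) \<le> C"
    using bounded_orbits[of z] unfolding bounded_iff by auto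
  show ?thesis
  proof (rule not_has_shadowing_suffix_family
      [where Y = "\<lambda>j g. real (length g) *\<^sub>R \<Phi> g (inv (\<Phi> (ba_word j)) z)"])
    show "\<exists>G. \<forall>s\<in>free_gens k. \<forall>g\<in>free_carrier k. suffix (ba_word j) g \<longrightarrow>
        suffix (ba_word j) (free_mult s g) \<longrightarrow>
        norm (real (length (free_mult s g)) *\<^sub>R \<Phi> (free_mult s g) (inv (\<Phi> (ba_word j)) z)
          - \<Phi> s (real (length g) *\<^sub>R \<Phi> g (inv (\<Phi> (ba_word j)) z))) \<le> G" for j
      using length_weighted_orbit_error[OF C] by blast
  next
    fix j K
    obtain n :: nat where n: "K * M / norm z < real n"
      using reals_Archimedean2 by blast
    let ?a = "replicate n (0::nat, True)"
    have a: "?a \<in> before_b k"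
      using replicate_before_b[OF two_generators] .
    have "M * K < real n * norm z"
      using n \<open>norm z > 0\<close> by (simp add: pos_divide_less_eq mult.commute)
    also have "\<dots> \<le> real n * (M * norm (\<Phi> ?a z))"
      using norm_le_power_a[OF M] by (simp add: mult_left_mono)
    finally have "M * K < M * (real n * norm (\<Phi> ?a z))"
      by (simp add: mult.left_commute)
    then have "K < real n * norm (\<Phi> ?a z)"
      using \<open>M > 0\<close> by simp
    also have "\<dots> \<le> real (length (?a @ ba_word j)) * norm (\<Phi> ?a z)"
      by (intro mult_right_mono) (auto simp: ba_word_def)
    finally show "\<exists>g\<in>free_carrier k. suffix (ba_word j) g \<and>
        K < norm (real (length g) *\<^sub>R \<Phi> g (inv (\<Phi> (ba_word j)) z))"
      using orbit_through_ba_word[OF a] append_ba_word_carrier[OF two_generators a]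
      by (intro bexI[of _ "?a @ ba_word j"]) (auto simp: suffix_def)
  qed
qed

end

theorem theorem3:
  fixes k :: nat and \<Phi> :: "fword \<Rightarrow> real^'m \<Rightarrow> real^'m"
  assumes "k \<ge> 2"
    and "free_action k \<Phi>"
    and "\<forall>g\<in>free_carrier k. linear (\<Phi> g) \<and> bij (\<Phi> g)"
  shows "\<not> has_shadowing k \<Phi>"
proof -
  interpret linear_free_action k \<Phi>
    using assms by unfold_locales
  show ?thesis
    using has_shadowing_imp_bounded_orbits not_has_shadowing_if_bounded_orbits by blast
qed

end
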